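(* Consider the closed-loop battery recycling model described in the context, and assume the data satisfy: the demands $d$, supplies $s$, costs $c$, values $v$, probabilities $p$ and material coefficients $\Delta$ are nonnegative, $u^{\mathrm{REC}}>0$, $u^{\mathrm{CP}}>0$, $\gamma\in[0,1)$, and every facility cost function $f$ is concave and monotonically increasing on $[0,\infty)$ with $f(0)=0$. Let $\overline{y}=(\overline{y}^{\mathrm{REC}},\overline{y}^{\mathrm{CP}})\geq 0$ satisfy the capacity-monotonicity constraints (Cap3), (Cap4) and the upper bounds (Cap5), (Cap6). Then there exists $x\geq 0$ such that $(\overline{y},x)$ satisfies all of the production constraints (Prod1)–(Prod5), the inventory constraints (Inv1)–(Inv4), and the capacity constraints (Cap1)–(Cap6); i.e. $\{(y,x)\geq 0 : (\mathrm{Prod}),(\mathrm{Inv}),(\mathrm{Cap}),\ y=\overline{y}\}\neq\emptyset$.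
   Context: Index sets (all finite): battery chemistries $\mathcal{I}$; recycling processes $\mathcal{J}$; materials $\mathcal{K}$ with a subset of cathode powders $\mathcal{K}^{\mathrm{CP}}\subseteq\mathcal{K}$; zones $\mathcal{Z}$; time periods $\mathcal{T}=\{1,\dots,T\}$; planning periods $\mathcal{L}=\{1,\dots,L\}$, where $\{\mathcal{T}_l\}_{l\in\mathcal{L}}$ is a partition of $\mathcal{T}$; stages $\mathcal{S}=\{1,\dots,S\}$, with $\sigma_t\in\mathcal{S}$ the stage of period $t\in\mathcal{T}\cup\{0\}$. For each stage $\sigma$, $\Omega_\sigma$ is a finite nonempty set of scenario-tree nodes. For each node $\omega$ there is an ancestor map $a_\omega$ assigning to each $t\in\mathcal{T}\cup\{0\}$ a node $a_\omega(t)\in\Omega_{\sigma_t}$, with $a_\omega(t)=\omega$ whenever $\omega\in\Omega_{\sigma_t}$. For each $l\in\mathcal{L}$ there is a positive integer $N^{\mathrm{REC}}_l$ with $\mathcal{N}^{\mathrm{REC}}_l=\{1,\dots,N^{\mathrm{REC}}_l\}$, and for each $l\in\mathcal{L},k\in\mathcal{K}^{\mathrm{CP}}$ a positive integer $N^{\mathrm{CP}}_{l,k}$ with $\mathcal{N}^{\mathrm{CP}}_{l,k}=\{1,\dots,N^{\mathrm{CP}}_{l,k}\}$. Data: $\Delta^{\mathrm{NB}}_{i,k}$ ($i\in\mathcal{I},k\in\mathcal{K}$), $\Delta^{\mathrm{CP}}_{k',k}$ ($k'\in\mathcal{K}^{\mathrm{CP}},k\in\mathcal{K}\setminus\mathcal{K}^{\mathrm{CP}}$),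 $\Delta^{\mathrm{MC}}_{k',k}$ ($k',k\in\mathcal{K}\setminus\mathcal{K}^{\mathrm{CP}}$), $\Delta^{\mathrm{REC}}_{k,i,j}$ ($k\in\mathcal{K},i\in\mathcal{I},j\in\mathcal{J}$); demand $d_{\omega,z,t,i}$ and retired-battery supply $s_{\omega,z,t,i}$ for $t\in\mathcal{T}$, $\omega\in\Omega_{\sigma_t}$; maximum capacities $u^{\mathrm{REC}},u^{\mathrm{CP}}$. Operational variables (indexed by $t\in\mathcal{T}$, $z\in\mathcal{Z}$, $\omega\in\Omega_{\sigma_t}$, plus $t=0$ for inventories): $x^{\mathrm{NM,NB}}_{\omega,z,t,k},x^{\mathrm{RM,INV}}_{\omega,z,t,k},x^{\mathrm{RM,S}}_{\omega,z,t,k},x^{\mathrm{INV}}_{\omega,z,t,k}$ ($k\in\mathcal{K}$); $x^{\mathrm{INV,NB}}_{\omega,z,t,k},x^{\mathrm{CP,INV}}_{\omega,z,t,k}$ ($k\in\mathcal{K}^{\mathrm{CP}}$); $x^{\mathrm{NM,CP}}_{\omega,z,t,k},x^{\mathrm{MC,CP}}_{\omega,z,t,k},x^{\mathrm{INV,MC}}_{\omega,z,t,k}$ ($k\in\mathcal{K}\setminus\mathcal{K}^{\mathrm{CP}}$); $x^{\mathrm{RB}}_{\omega,z,t,i}$ ($i\in\mathcal{I}$); $x^{\mathrm{RB,RM}}_{\omega,z,t,i,j}$; transports $x^{\mathrm{TR,RM}}_{\omega,z,z',t,k}$ and $x^{\mathrm{TR,RB}}_{\omega,z,z',t,i}$ for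 $z'\neq z$. Capacity variables: $y^{\mathrm{REC}}_{z,l,j,n}$ ($n\in\mathcal{N}^{\mathrm{REC}}_l$) and $y^{\mathrm{CP}}_{z,l,k,n}$ ($k\in\mathcal{K}^{\mathrm{CP}}$, $n\in\mathcal{N}^{\mathrm{CP}}_{l,k}$). Production constraints, for all $t\in\mathcal{T},z\in\mathcal{Z},\omega\in\Omega_{\sigma_t}$: (Prod1) $\sum_{i}\Delta^{\mathrm{NB}}_{i,k}d_{\omega,z,t,i}=x^{\mathrm{NM,NB}}_{\omega,z,t,k}+x^{\mathrm{INV,NB}}_{\omega,z,t,k}$ for $k\in\mathcal{K}^{\mathrm{CP}}$; (Prod2) $\sum_{i}\Delta^{\mathrm{NB}}_{i,k}d_{\omega,z,t,i}=x^{\mathrm{NM,NB}}_{\omega,z,t,k}$ for $k\in\mathcal{K}\setminus\mathcal{K}^{\mathrm{CP}}$; (Prod3) $\sum_{k'\in\mathcal{K}^{\mathrm{CP}}}\Delta^{\mathrm{CP}}_{k',k}x^{\mathrm{CP,INV}}_{\omega,z,t,k'}=x^{\mathrm{NM,CP}}_{\omega,z,t,k}+x^{\mathrm{MC,CP}}_{\omega,z,t,k}$ for $k\in\mathcal{K}\setminus\mathcal{K}^{\mathrm{CP}}$; (Prod4) $\sum_{k'\in\mathcal{K}\setminus\mathcal{K}^{\mathrm{CP}}}\Delta^{\mathrm{MC}}_{k',k}x^{\mathrm{MC,CP}}_{\omega,z,t,k'}=x^{\mathrm{INV,MC}}_{\omega,z,t,k}$ for $k\in\mathcal{K}\setminus\mathcal{K}^{\mathrm{CP}}$;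 (Prod5) $x^{\mathrm{RM,INV}}_{\omega,z,t,k}+x^{\mathrm{RM,S}}_{\omega,z,t,k}=\sum_{i,j}\Delta^{\mathrm{REC}}_{k,i,j}x^{\mathrm{RB,RM}}_{\omega,z,t,i,j}$ for $k\in\mathcal{K}$. Inventory constraints: (Inv1) $x^{\mathrm{RB}}_{\omega,z,0,i}=0$ and (Inv2) $x^{\mathrm{INV}}_{\omega,z,0,k}=0$ for all $\omega\in\Omega_{\sigma_0}$; and for all $t\in\mathcal{T},z,\omega\in\Omega_{\sigma_t}$, with $\omega'=a_\omega(t-1)$: (Inv3) $x^{\mathrm{RB}}_{\omega,z,t,i}=x^{\mathrm{RB}}_{\omega',z,t-1,i}+\sum_{z'\neq z}(x^{\mathrm{TR,RB}}_{\omega,z',z,t,i}-x^{\mathrm{TR,RB}}_{\omega,z,z',t,i})+s_{\omega,z,t,i}-\sum_{j}x^{\mathrm{RB,RM}}_{\omega,z,t,i,j}$; (Inv4) for $k\in\mathcal{K}\setminus\mathcal{K}^{\mathrm{CP}}$: $x^{\mathrm{INV}}_{\omega,z,t,k}=x^{\mathrm{INV}}_{\omega',z,t-1,k}+\sum_{z'\neq z}(x^{\mathrm{TR,RM}}_{\omega,z',z,t,k}-x^{\mathrm{TR,RM}}_{\omega,z,z',t,k})+x^{\mathrm{RM,INV}}_{\omega,z,t,k}-x^{\mathrm{INV,MC}}_{\omega,z,t,k}$, and for $k\in\mathcal{K}^{\mathrm{CP}}$: $x^{\mathrm{INV}}_{\omega,z,t,k}=x^{\mathrm{INV}}_{\omega',z,t-1,k}+\sum_{z'\neq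 z}(x^{\mathrm{TR,RM}}_{\omega,z',z,t,k}-x^{\mathrm{TR,RM}}_{\omega,z,z',t,k})+x^{\mathrm{RM,INV}}_{\omega,z,t,k}+x^{\mathrm{CP,INV}}_{\omega,z,t,k}-x^{\mathrm{INV,NB}}_{\omega,z,t,k}$. Capacity constraints: (Cap1) $\sum_{n\in\mathcal{N}^{\mathrm{REC}}_l}y^{\mathrm{REC}}_{z,l,j,n}\geq\sum_i x^{\mathrm{RB,RM}}_{\omega,z,t,i,j}$ for all $j,l,t\in\mathcal{T}_l,z,\omega\in\Omega_{\sigma_t}$; (Cap2) $\sum_{n\in\mathcal{N}^{\mathrm{CP}}_{l,k}}y^{\mathrm{CP}}_{z,l,k,n}\geq x^{\mathrm{CP,INV}}_{\omega,z,t,k}$ for all $k\in\mathcal{K}^{\mathrm{CP}},l,t\in\mathcal{T}_l,z,\omega\in\Omega_{\sigma_t}$; (Cap3) $\sum_{n\in\mathcal{N}^{\mathrm{REC}}_l}y^{\mathrm{REC}}_{z,l,j,n}\geq\sum_{n\in\mathcal{N}^{\mathrm{REC}}_{l-1}}y^{\mathrm{REC}}_{z,l-1,j,n}$ for $l\geq2$; (Cap4) $\sum_{n\in\mathcal{N}^{\mathrm{CP}}_{l,k}}y^{\mathrm{CP}}_{z,l,k,n}\geq\sum_{n\in\mathcal{N}^{\mathrm{CP}}_{l-1,k}}y^{\mathrm{CP}}_{z,l-1,k,n}$ for $l\geq2$; (Cap5) $y^{\mathrm{REC}}_{z,l,j,n}\leq u^{\mathrm{REC}}$; (Cap6) $y^{\mathrm{CP}}_{z,l,k,n}\leq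 u^{\mathrm{CP}}$. *)

theory Defs
  imports "HOL-Analysis.Analysis"
begin

text \<open>Index types: 'i chemistries, 'j recycling processes, 'k materials,
  'z zones, 'w scenario-tree nodes. Time periods, planning periods, stages
  and facility indices are natural numbers.\<close>

record ('i, 'j, 'k, 'z, 'w) model =
  Ichem  :: "'i set"
  Jproc  :: "'j set"
  Kmat   :: "'k set"
  KCP    :: "'k set"                 \<comment> \<open>cathode powders\<close>
  Zones  :: "'z set"
  Tn     :: nat
  Ln     :: nat
  Tl     :: "nat \<Rightarrow> nat set"
  Sn     :: nat
  sig    :: "nat \<Rightarrow> nat"            \<comment> \<open>stage sigma_t of period t\<close>
  Om     :: "nat \<Rightarrow> 'w set"
  anc    :: "'w \<Rightarrow> nat \<Rightarrow> 'w"
  NREC   :: "nat \<Rightarrow> nat"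
  NCP    :: "nat \<Rightarrow> 'k \<Rightarrow> nat"
  DNB    :: "'i \<Rightarrow> 'k \<Rightarrow> real"
  DCP    :: "'k \<Rightarrow> 'k \<Rightarrow> real"
  DMC    :: "'k \<Rightarrow> 'k \<Rightarrow> real"
  DREC   :: "'k \<Rightarrow> 'i \<Rightarrow> 'j \<Rightarrow> real"
  dem    :: "'w \<Rightarrow> 'z \<Rightarrow> nat \<Rightarrow> 'i \<Rightarrow> real"
  supp   :: "'w \<Rightarrow> 'z \<Rightarrow> nat \<Rightarrow> 'i \<Rightarrow> real"
  uREC   :: real
  uCP    :: real

definition wf_model :: "('i, 'j, 'k, 'z, 'w) model \<Rightarrow> bool" where
  "wf_model M \<longleftrightarrow>
     finite (Ichem M) \<and> finite (Jproc M) \<and> finite (Kmat M) \<and> finite (Zones M) \<and>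
     KCP M \<subseteq> Kmat M \<and>
     \<comment> \<open>{T_l} is a partition of {1..T}\<close>
     (\<Union>l\<in>{1..Ln M}. Tl M l) = {1..Tn M} \<and>
     (\<forall>l\<in>{1..Ln M}. Tl M l \<noteq> {}) \<and>
     (\<forall>l\<in>{1..Ln M}. \<forall>l'\<in>{1..Ln M}. l \<noteq> l' \<longrightarrow> Tl M l \<inter> Tl M l' = {}) \<and>
     \<comment> \<open>stages\<close>
     (\<forall>t\<in>{0..Tn M}. sig M t \<in> {1..Sn M}) \<and>
     (\<forall>\<sigma>\<in>{1..Sn M}. finite (Om M \<sigma>) \<and> Om M \<sigma> \<noteq> {}) \<and>
     \<comment> \<open>ancestor maps\<close>
     (\<forall>\<sigma>\<in>{1..Sn M}. \<forall>\<omega>\<in>Om M \<sigma>. \<forall>t\<in>{0..Tn M}.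
         anc M \<omega> t \<in> Om M (sig M t) \<and> (\<omega> \<in> Om M (sig M t) \<longrightarrow> anc M \<omega> t = \<omega>)) \<and>
     \<comment> \<open>positive numbers of facility slots\<close>
     (\<forall>l\<in>{1..Ln M}. NREC M l > 0) \<and>
     (\<forall>l\<in>{1..Ln M}. \<forall>k\<in>KCP M. NCP M l k > 0)"

record ('i, 'j, 'k, 'z, 'w) opvars =
  xNMNB   :: "'w \<Rightarrow> 'z \<Rightarrow> nat \<Rightarrow> 'k \<Rightarrow> real"
  xRMINV  :: "'w \<Rightarrow> 'z \<Rightarrow> nat \<Rightarrow> 'k \<Rightarrow> real"
  xRMS    :: "'w \<Rightarrow> 'z \<Rightarrow> nat \<Rightarrow> 'k \<Rightarrow> real"
  xINV    :: "'w \<Rightarrow> 'z \<Rightarrow> nat \<Rightarrow> 'k \<Rightarrow> real"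
  xINVNB  :: "'w \<Rightarrow> 'z \<Rightarrow> nat \<Rightarrow> 'k \<Rightarrow> real"
  xCPINV  :: "'w \<Rightarrow> 'z \<Rightarrow> nat \<Rightarrow> 'k \<Rightarrow> real"
  xNMCP   :: "'w \<Rightarrow> 'z \<Rightarrow> nat \<Rightarrow> 'k \<Rightarrow> real"
  xMCCP   :: "'w \<Rightarrow> 'z \<Rightarrow> nat \<Rightarrow> 'k \<Rightarrow> real"
  xINVMC  :: "'w \<Rightarrow> 'z \<Rightarrow> nat \<Rightarrow> 'k \<Rightarrow> real"
  xRB     :: "'w \<Rightarrow> 'z \<Rightarrow> nat \<Rightarrow> 'i \<Rightarrow> real"
  xRBRM   :: "'w \<Rightarrow> 'z \<Rightarrow> nat \<Rightarrow> 'i \<Rightarrow> 'j \<Rightarrow> real"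
  xTRRM   :: "'w \<Rightarrow> 'z \<Rightarrow> 'z \<Rightarrow> nat \<Rightarrow> 'k \<Rightarrow> real"
  xTRRB   :: "'w \<Rightarrow> 'z \<Rightarrow> 'z \<Rightarrow> nat \<Rightarrow> 'i \<Rightarrow> real"

definition opvars_nonneg :: "('i, 'j, 'k, 'z, 'w) opvars \<Rightarrow> bool" where
  "opvars_nonneg x \<longleftrightarrow>
     (\<forall>\<omega> z t k. xNMNB x \<omega> z t k \<ge> 0 \<and> xRMINV x \<omega> z t k \<ge> 0 \<and> xRMS x \<omega> z t k \<ge> 0 \<and>
                 xINV x \<omega> z t k \<ge> 0 \<and> xINVNB x \<omega> z t k \<ge> 0 \<and> xCPINV x \<omega> z t k \<ge> 0 \<and>
                 xNMCP x \<omega> z t k \<ge> 0 \<and> xMCCP x \<omega> z t k \<ge> 0 \<and> xINVMC x \<omega> z t k \<ge> 0) \<and>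
     (\<forall>\<omega> z t i. xRB x \<omega> z t i \<ge> 0) \<and>
     (\<forall>\<omega> z t i j. xRBRM x \<omega> z t i j \<ge> 0) \<and>
     (\<forall>\<omega> z z' t k. xTRRM x \<omega> z z' t k \<ge> 0) \<and>
     (\<forall>\<omega> z z' t i. xTRRB x \<omega> z z' t i \<ge> 0)"

definition prod_constraints ::
  "('i, 'j, 'k, 'z, 'w) model \<Rightarrow> ('i, 'j, 'k, 'z, 'w) opvars \<Rightarrow> bool" where
  "prod_constraints M x \<longleftrightarrow>
    (\<forall>t\<in>{1..Tn M}. \<forall>z\<in>Zones M. \<forall>\<omega>\<in>Om M (sig M t).
      \<comment> \<open>(Prod1)\<close>
      (\<forall>k\<in>KCP M. (\<Sum>i\<in>Ichem M. DNB M i k * dem M \<omega> z t i)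
                    = xNMNB x \<omega> z t k + xINVNB x \<omega> z t k) \<and>
      \<comment> \<open>(Prod2)\<close>
      (\<forall>k\<in>Kmat M - KCP M. (\<Sum>i\<in>Ichem M. DNB M i k * dem M \<omega> z t i) = xNMNB x \<omega> z t k) \<and>
      \<comment> \<open>(Prod3)\<close>
      (\<forall>k\<in>Kmat M - KCP M. (\<Sum>k'\<in>KCP M. DCP M k' k * xCPINV x \<omega> z t k')
                    = xNMCP x \<omega> z t k + xMCCP x \<omega> z t k) \<and>
      \<comment> \<open>(Prod4)\<close>
      (\<forall>k\<in>Kmat M - KCP M. (\<Sum>k'\<in>Kmat M - KCP M. DMC M k' k * xMCCP x \<omega> z t k')
                    = xINVMC x \<omega> z t k) \<and>
      \<comment> \<open>(Prod5)\<close>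
      (\<forall>k\<in>Kmat M. xRMINV x \<omega> z t k + xRMS x \<omega> z t k
                    = (\<Sum>i\<in>Ichem M. \<Sum>j\<in>Jproc M. DREC M k i j * xRBRM x \<omega> z t i j)))"

definition inv_constraints ::
  "('i, 'j, 'k, 'z, 'w) model \<Rightarrow> ('i, 'j, 'k, 'z, 'w) opvars \<Rightarrow> bool" where
  "inv_constraints M x \<longleftrightarrow>
    \<comment> \<open>(Inv1), (Inv2)\<close>
    (\<forall>z\<in>Zones M. \<forall>\<omega>\<in>Om M (sig M 0).
       (\<forall>i\<in>Ichem M. xRB x \<omega> z 0 i = 0) \<and> (\<forall>k\<in>Kmat M. xINV x \<omega> z 0 k = 0)) \<and>
    (\<forall>t\<in>{1..Tn M}. \<forall>z\<in>Zones M. \<forall>\<omega>\<in>Om M (sig M t).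
      let \<omega>' = anc M \<omega> (t - 1) in
      \<comment> \<open>(Inv3)\<close>
      (\<forall>i\<in>Ichem M. xRB x \<omega> z t i =
          xRB x \<omega>' z (t - 1) i
          + (\<Sum>z'\<in>Zones M - {z}. xTRRB x \<omega> z' z t i - xTRRB x \<omega> z z' t i)
          + supp M \<omega> z t i - (\<Sum>j\<in>Jproc M. xRBRM x \<omega> z t i j)) \<and>
      \<comment> \<open>(Inv4), non-cathode-powder materials\<close>
      (\<forall>k\<in>Kmat M - KCP M. xINV x \<omega> z t k =
          xINV x \<omega>' z (t - 1) k
          + (\<Sum>z'\<in>Zones M - {z}. xTRRM x \<omega> z' z t k - xTRRM x \<omega> z z' t k)
          + xRMINV x \<omega> z t k - xINVMC x \<omega> z t k) \<and>
      \<comment> \<open>(Inv4), cathode powders\<close>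
      (\<forall>k\<in>KCP M. xINV x \<omega> z t k =
          xINV x \<omega>' z (t - 1) k
          + (\<Sum>z'\<in>Zones M - {z}. xTRRM x \<omega> z' z t k - xTRRM x \<omega> z z' t k)
          + xRMINV x \<omega> z t k + xCPINV x \<omega> z t k - xINVNB x \<omega> z t k))"

definition cap_constraints ::
  "('i, 'j, 'k, 'z, 'w) model \<Rightarrow> ('z \<Rightarrow> nat \<Rightarrow> 'j \<Rightarrow> nat \<Rightarrow> real)
     \<Rightarrow> ('z \<Rightarrow> nat \<Rightarrow> 'k \<Rightarrow> nat \<Rightarrow> real) \<Rightarrow> ('i, 'j, 'k, 'z, 'w) opvars \<Rightarrow> bool" where
  "cap_constraints M yREC yCP x \<longleftrightarrow>
    \<comment> \<open>(Cap1)\<close>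
    (\<forall>j\<in>Jproc M. \<forall>l\<in>{1..Ln M}. \<forall>t\<in>Tl M l. \<forall>z\<in>Zones M. \<forall>\<omega>\<in>Om M (sig M t).
       (\<Sum>n\<in>{1..NREC M l}. yREC z l j n) \<ge> (\<Sum>i\<in>Ichem M. xRBRM x \<omega> z t i j)) \<and>
    \<comment> \<open>(Cap2)\<close>
    (\<forall>k\<in>KCP M. \<forall>l\<in>{1..Ln M}. \<forall>t\<in>Tl M l. \<forall>z\<in>Zones M. \<forall>\<omega>\<in>Om M (sig M t).
       (\<Sum>n\<in>{1..NCP M l k}. yCP z l k n) \<ge> xCPINV x \<omega> z t k) \<and>
    \<comment> \<open>(Cap3)\<close>
    (\<forall>z\<in>Zones M. \<forall>j\<in>Jproc M. \<forall>l\<in>{2..Ln M}.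
       (\<Sum>n\<in>{1..NREC M l}. yREC z l j n) \<ge> (\<Sum>n\<in>{1..NREC M (l - 1)}. yREC z (l - 1) j n)) \<and>
    \<comment> \<open>(Cap4)\<close>
    (\<forall>z\<in>Zones M. \<forall>k\<in>KCP M. \<forall>l\<in>{2..Ln M}.
       (\<Sum>n\<in>{1..NCP M l k}. yCP z l k n) \<ge> (\<Sum>n\<in>{1..NCP M (l - 1) k}. yCP z (l - 1) k n)) \<and>
    \<comment> \<open>(Cap5)\<close>
    (\<forall>z\<in>Zones M. \<forall>l\<in>{1..Ln M}. \<forall>j\<in>Jproc M. \<forall>n\<in>{1..NREC M l}. yREC z l j n \<le> uREC M) \<and>
    \<comment> \<open>(Cap6)\<close>
    (\<forall>z\<in>Zones M. \<forall>l\<in>{1..Ln M}. \<forall>k\<in>KCP M. \<forall>n\<in>{1..NCP M l k}. yCP z l k n \<le> uCP M)"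

end

theory Submission
  imports Defs
begin

text \<open>All recycling, powder and transport flows are zero, so the
  capacity constraints reduce to the nonnegativity and monotonicity of the given capacities,
  and the only nontrivial balance is (Inv3), which the stockpile satisfies by construction.\<close>

text \<open>The clipping by \<open>max 0\<close> is inert wherever the supply data are assumed nonnegative;
  it makes the stockpile nonnegative also at the indices outside the scenario tree, which
  \<^const>\<open>opvars_nonneg\<close> constrains too.\<close>

primrec stockpile :: "('i, 'j, 'k, 'z, 'w) model \<Rightarrow> 'w \<Rightarrow> 'z \<Rightarrow> nat \<Rightarrow> 'i \<Rightarrow> real" where
  "stockpile M \<omega> z 0 i = 0"
| "stockpile M \<omega> z (Suc t) i = stockpile M (anc M \<omega> t) z t i + max 0 (supp M \<omega> z (Suc t) i)"

lemma stockpile_nonneg: "stockpile M \<omega> z t i \<ge> 0"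
  by (induction t arbitrary: \<omega>) auto

lemma stockpile_balance:
  assumes "t \<ge> 1" and "supp M \<omega> z t i \<ge> 0"
  shows "stockpile M \<omega> z t i = stockpile M (anc M \<omega> (t - 1)) z (t - 1) i + supp M \<omega> z t i"
  using assms by (cases t) auto

definition stockpiling_plan :: "('i, 'j, 'k, 'z, 'w) model \<Rightarrow> ('i, 'j, 'k, 'z, 'w) opvars" where
  "stockpiling_plan M = \<lparr>
     xNMNB = (\<lambda>\<omega> z t k. max 0 (\<Sum>i\<in>Ichem M. DNB M i k * dem M \<omega> z t i)),
     xRMINV = (\<lambda>_ _ _ _. 0), xRMS = (\<lambda>_ _ _ _. 0), xINV = (\<lambda>_ _ _ _. 0),
     xINVNB = (\<lambda>_ _ _ _. 0), xCPINV = (\<lambda>_ _ _ _. 0), xNMCP = (\<lambda>_ _ _ _. 0),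
     xMCCP = (\<lambda>_ _ _ _. 0), xINVMC = (\<lambda>_ _ _ _. 0),
     xRB = stockpile M,
     xRBRM = (\<lambda>_ _ _ _ _. 0), xTRRM = (\<lambda>_ _ _ _ _. 0), xTRRB = (\<lambda>_ _ _ _ _. 0) \<rparr>"

lemma opvars_nonneg_stockpiling_plan: "opvars_nonneg (stockpiling_plan M)"
  unfolding opvars_nonneg_def stockpiling_plan_def by (simp add: stockpile_nonneg)

lemma prod_constraints_stockpiling_plan:
  assumes "KCP M \<subseteq> Kmat M"
    and "\<forall>t\<in>{1..Tn M}. \<forall>\<omega>\<in>Om M (sig M t). \<forall>z\<in>Zones M. \<forall>i\<in>Ichem M. dem M \<omega> z t i \<ge> 0"
    and "\<forall>i\<in>Ichem M. \<forall>k\<in>Kmat M. DNB M i k \<ge> 0"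
  shows "prod_constraints M (stockpiling_plan M)"
proof -
  have "(\<Sum>i\<in>Ichem M. DNB M i k * dem M \<omega> z t i) \<ge> 0"
    if "t \<in> {1..Tn M}" "\<omega> \<in> Om M (sig M t)" "z \<in> Zones M" "k \<in> Kmat M" for t \<omega> z k
    using that assms(2,3) by (intro sum_nonneg) auto
  with assms(1) show ?thesis
    unfolding prod_constraints_def stockpiling_plan_def by auto
qed

lemma inv_constraints_stockpiling_plan:
  assumes "\<forall>t\<in>{1..Tn M}. \<forall>\<omega>\<in>Om M (sig M t). \<forall>z\<in>Zones M. \<forall>i\<in>Ichem M. supp M \<omega> z t i \<ge> 0"
  shows "inv_constraints M (stockpiling_plan M)"
  using assms unfolding inv_constraints_def stockpiling_plan_def Let_def
  by (simp add: stockpile_balance)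

lemma cap_constraints_stockpiling_plan:
  assumes "\<forall>z\<in>Zones M. \<forall>l\<in>{1..Ln M}. \<forall>j\<in>Jproc M. \<forall>n\<in>{1..NREC M l}. yREC z l j n \<ge> 0"
    and "\<forall>z\<in>Zones M. \<forall>l\<in>{1..Ln M}. \<forall>k\<in>KCP M. \<forall>n\<in>{1..NCP M l k}. yCP z l k n \<ge> 0"
    and "\<forall>z\<in>Zones M. \<forall>j\<in>Jproc M. \<forall>l\<in>{2..Ln M}.
       (\<Sum>n\<in>{1..NREC M l}. yREC z l j n) \<ge> (\<Sum>n\<in>{1..NREC M (l - 1)}. yREC z (l - 1) j n)"
    and "\<forall>z\<in>Zones M. \<forall>k\<in>KCP M. \<forall>l\<in>{2..Ln M}.
       (\<Sum>n\<in>{1..NCP M l k}. yCP z l k n) \<ge> (\<Sum>n\<in>{1..NCP M (l - 1) k}. yCP z (l - 1) k n)"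
    and "\<forall>z\<in>Zones M. \<forall>l\<in>{1..Ln M}. \<forall>j\<in>Jproc M. \<forall>n\<in>{1..NREC M l}. yREC z l j n \<le> uREC M"
    and "\<forall>z\<in>Zones M. \<forall>l\<in>{1..Ln M}. \<forall>k\<in>KCP M. \<forall>n\<in>{1..NCP M l k}. yCP z l k n \<le> uCP M"
  shows "cap_constraints M yREC yCP (stockpiling_plan M)"
proof -
  have "(\<Sum>n\<in>{1..NREC M l}. yREC z l j n) \<ge> 0"
    if "j \<in> Jproc M" "l \<in> {1..Ln M}" "z \<in> Zones M" for j l z
    using that assms(1) by (intro sum_nonneg) auto
  moreover have "(\<Sum>n\<in>{1..NCP M l k}. yCP z l k n) \<ge> 0"
    if "k \<in> KCP M" "l \<in> {1..Ln M}" "z \<in> Zones M" for k l z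
    using that assms(2) by (intro sum_nonneg) auto
  ultimately show ?thesis
    using assms(3-6) unfolding cap_constraints_def stockpiling_plan_def by simp
qed

theorem proposition1:
  fixes M :: "('i, 'j, 'k, 'z, 'w) model"
    and c :: "'c \<Rightarrow> real"        \<comment> \<open>cost coefficients\<close>
    and v :: "'v \<Rightarrow> real"        \<comment> \<open>values\<close>
    and p :: "'w \<Rightarrow> real"        \<comment> \<open>scenario-node probabilities\<close>
    and \<gamma> :: real                 \<comment> \<open>discount factor\<close>
    and f :: "'f \<Rightarrow> real \<Rightarrow> real"  \<comment> \<open>facility cost functions\<close>
    and yREC :: "'z \<Rightarrow> nat \<Rightarrow> 'j \<Rightarrow> nat \<Rightarrow> real"
    and yCP :: "'z \<Rightarrow> nat \<Rightarrow> 'k \<Rightarrow> nat \<Rightarrow> real"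
  assumes wf: "wf_model M"
    and d_nonneg: "\<forall>t\<in>{1..Tn M}. \<forall>\<omega>\<in>Om M (sig M t). \<forall>z\<in>Zones M. \<forall>i\<in>Ichem M. dem M \<omega> z t i \<ge> 0"
    and s_nonneg: "\<forall>t\<in>{1..Tn M}. \<forall>\<omega>\<in>Om M (sig M t). \<forall>z\<in>Zones M. \<forall>i\<in>Ichem M. supp M \<omega> z t i \<ge> 0"
    and c_nonneg: "\<forall>e. c e \<ge> 0"
    and v_nonneg: "\<forall>e. v e \<ge> 0"
    and p_nonneg: "\<forall>\<omega>. p \<omega> \<ge> 0"
    and DNB_nonneg: "\<forall>i\<in>Ichem M. \<forall>k\<in>Kmat M. DNB M i k \<ge> 0"
    and DCP_nonneg: "\<forall>k'\<in>KCP M. \<forall>k\<in>Kmat M - KCP M. DCP M k' k \<ge> 0"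
    and DMC_nonneg: "\<forall>k'\<in>Kmat M - KCP M. \<forall>k\<in>Kmat M - KCP M. DMC M k' k \<ge> 0"
    and DREC_nonneg: "\<forall>k\<in>Kmat M. \<forall>i\<in>Ichem M. \<forall>j\<in>Jproc M. DREC M k i j \<ge> 0"
    and uREC_pos: "uREC M > 0"
    and uCP_pos: "uCP M > 0"
    and gamma: "0 \<le> \<gamma>" "\<gamma> < 1"
    and f_props: "\<forall>e. concave_on {0..} (f e) \<and> mono_on {0..} (f e) \<and> f e 0 = 0"
    and yREC_nonneg: "\<forall>z\<in>Zones M. \<forall>l\<in>{1..Ln M}. \<forall>j\<in>Jproc M. \<forall>n\<in>{1..NREC M l}. yREC z l j n \<ge> 0"
    and yCP_nonneg: "\<forall>z\<in>Zones M. \<forall>l\<in>{1..Ln M}. \<forall>k\<in>KCP M. \<forall>n\<in>{1..NCP M l k}. yCP z l k n \<ge> 0"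
    and Cap3: "\<forall>z\<in>Zones M. \<forall>j\<in>Jproc M. \<forall>l\<in>{2..Ln M}.
       (\<Sum>n\<in>{1..NREC M l}. yREC z l j n) \<ge> (\<Sum>n\<in>{1..NREC M (l - 1)}. yREC z (l - 1) j n)"
    and Cap4: "\<forall>z\<in>Zones M. \<forall>k\<in>KCP M. \<forall>l\<in>{2..Ln M}.
       (\<Sum>n\<in>{1..NCP M l k}. yCP z l k n) \<ge> (\<Sum>n\<in>{1..NCP M (l - 1) k}. yCP z (l - 1) k n)"
    and Cap5: "\<forall>z\<in>Zones M. \<forall>l\<in>{1..Ln M}. \<forall>j\<in>Jproc M. \<forall>n\<in>{1..NREC M l}. yREC z l j n \<le> uREC M"
    and Cap6: "\<forall>z\<in>Zones M. \<forall>l\<in>{1..Ln M}. \<forall>k\<in>KCP M. \<forall>n\<in>{1..NCP M l k}. yCP z l k n \<le> uCP M"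
  shows "\<exists>x :: ('i, 'j, 'k, 'z, 'w) opvars.
           opvars_nonneg x \<and> prod_constraints M x \<and> inv_constraints M x \<and>
           cap_constraints M yREC yCP x"
proof (intro exI conjI)
  show "opvars_nonneg (stockpiling_plan M)"
    by (rule opvars_nonneg_stockpiling_plan)
  have "KCP M \<subseteq> Kmat M"
    using wf unfolding wf_model_def by blast
  then show "prod_constraints M (stockpiling_plan M)"
    using d_nonneg DNB_nonneg by (rule prod_constraints_stockpiling_plan)
  show "inv_constraints M (stockpiling_plan M)"
    using s_nonneg by (rule inv_constraints_stockpiling_plan)
  show "cap_constraints M yREC yCP (stockpiling_plan M)"
    using yREC_nonneg yCP_nonneg Cap3 Cap4 Cap5 Cap6 by (rule cap_constraints_stockpiling_plan)
qed

end
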